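(* Let $n = M\times N\ge 2$ and let $m_1, m_2$ be positive integers. Let $\sigma_0,\sigma_1,\sigma_2$ be arbitrary permutations of $\{1,2,\ldots,n\}$ (these are the inverse pre-, mid- and post-permutations $f_{S0}^{-1}, f_{S1}^{-1}, f_{S2}^{-1}$ of a five-stage permutation–diffusion–permutation–diffusion–permutation cipher). For each plaintext position $k\in\{1,\ldots,n\}$ define the associated set of ciphertext positions $$A_k=\bigl\{\sigma_2\bigl(\sigma_1(\sigma_0(k)-i)-j\bigr)\;:\;0\le i\le m_1,\ 0\le j\le m_2,\ \sigma_0(k)-i\ge 1,\ \sigma_1(\sigma_0(k)-i)-j\ge 1\bigr\}.$$ Then the family $\{A_k\}_{k=1}^{n}$ contains a complete chain of length $n$: there is an ordering $k_1,k_2,\ldots,k_n$ of $\{1,\ldots,n\}$ (i.e. a bijection $t\mapsto k_t$) such that $A_{k_t}\cap A_{k_{t+1}}\neq\emptyset$ for every $t=1,\ldots,n-1$, and for every $t\le n-1$ every element of $A_{k_t}$ belongs to $A_{k_{t-1}}\cap A_{k_t}$ (when $t\ge 2$) or to $A_{k_t}\cap A_{k_{t+1}}$.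
   Context: This formalizes the paper's "associated position expression" for a five-stage plaintext non-delayed chaotic cipher: decryption is $P(k)=f_{D1}^{-1}(\ldots)$ in which plaintext pixel $P(k)$ depends exactly on the ciphertext pixels $C(p)$ with $p\in A_k$ (positions $\le 0$ correspond to fixed initial conditions and are not ciphertext pixels, hence are excluded). A chain is a sequence of sets (nodes) in which every two adjacent sets have nonempty intersection; the first node is the chain head and the last the chain tail. A complete chain of length $n$ is a chain that uses all $n$ sets, in which every element of every node other than the tail lies in the intersection of that node with an adjacent node. *)

theory Defs
  imports Main
begin

text \<open>Positions are natural numbers; the guards "s0 k - i \<ge> 1" etc. are exactly
  the paper's conditions (for nat, a - b \<ge> 1 iff a > b, so truncation never
  matters).\<close>
definition assoc_set ::
  "(nat \<Rightarrow> nat) \<Rightarrow> (nat \<Rightarrow> nat) \<Rightarrow> (nat \<Rightarrow> nat) \<Rightarrow> nat \<Rightarrow> nat \<Rightarrow> nat \<Rightarrow> nat set" where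
  "assoc_set s0 s1 s2 m1 m2 k =
     {s2 (s1 (s0 k - i) - j) | i j.
        i \<le> m1 \<and> j \<le> m2 \<and> s0 k - i \<ge> 1 \<and> s1 (s0 k - i) - j \<ge> 1}"

definition has_complete_chain :: "(nat \<Rightarrow> 'a set) \<Rightarrow> nat \<Rightarrow> bool" where
  "has_complete_chain A n \<longleftrightarrow>
     (\<exists>ks. bij_betw ks {1..n} {1..n} \<and>
        (\<forall>t. 1 \<le> t \<and> t \<le> n - 1 \<longrightarrow> A (ks t) \<inter> A (ks (t + 1)) \<noteq> {}) \<and>
        (\<forall>t. 1 \<le> t \<and> t \<le> n - 1 \<longrightarrow>
           (\<forall>x \<in> A (ks t).
              (2 \<le> t \<and> x \<in> A (ks (t - 1)) \<inter> A (ks t)) \<or>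
              x \<in> A (ks t) \<inter> A (ks (t + 1)))))"

end

theory Submission
  imports Defs
begin

text \<open>Order the plaintext positions by their image under the pre-permutation, i.e. take
  k_t = s0^-1(t). Then A(k_t) is the set of s2(s1(t - i) - j) with 0 \<le> i \<le> m1, a window
  of length m1 + 1 sliding along t. Consecutive windows share s2(s1 t), and an element of
  A(k_t) taken with offset i < m1 occurs in A(k_(t+1)) with offset i + 1, while one taken
  with offset i = m1 \<ge> 1 occurs in A(k_(t-1)) with offset m1 - 1.\<close>

lemma mem_assoc_set:
  "x \<in> assoc_set s0 s1 s2 m1 m2 k \<longleftrightarrow>
   (\<exists>i j. x = s2 (s1 (s0 k - i) - j) \<and> i \<le> m1 \<and> j \<le> m2 \<and>
      1 \<le> s0 k - i \<and> 1 \<le> s1 (s0 k - i) - j)"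
  unfolding assoc_set_def by blast

lemma assoc_set_eq_assoc_set_id:
  "assoc_set s0 s1 s2 m1 m2 k = assoc_set id s1 s2 m1 m2 (s0 k)"
  unfolding assoc_set_def by simp

lemma has_complete_chain_reindex:
  assumes "bij_betw s0 {1..n} {1..n}"
    and "\<And>k. k \<in> {1..n} \<Longrightarrow> A k = B (s0 k)"
    and "has_complete_chain B n"
  shows "has_complete_chain A n"
proof -
  obtain ks where ks: "bij_betw ks {1..n} {1..n}"
    and inter: "\<forall>t. 1 \<le> t \<and> t \<le> n - 1 \<longrightarrow> B (ks t) \<inter> B (ks (t + 1)) \<noteq> {}"
    and cover: "\<forall>t. 1 \<le> t \<and> t \<le> n - 1 \<longrightarrow> (\<forall>x \<in> B (ks t).
        (2 \<le> t \<and> x \<in> B (ks (t - 1)) \<inter> B (ks t)) \<or> x \<in> B (ks t) \<inter> B (ks (t + 1)))"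
    using assms(3) unfolding has_complete_chain_def by blast
  define ks' where "ks' = inv_into {1..n} s0 \<circ> ks"
  have "bij_betw ks' {1..n} {1..n}"
    unfolding ks'_def using ks assms(1) bij_betw_inv_into bij_betw_trans by blast
  moreover have agree: "A (ks' t) = B (ks t)" if "t \<in> {1..n}" for t
  proof -
    have kt: "ks t \<in> {1..n}" using ks that by (rule bij_betw_apply)
    have "ks' t \<in> {1..n}"
      unfolding ks'_def using bij_betw_apply[OF bij_betw_inv_into[OF assms(1)] kt] by simp
    moreover have "s0 (ks' t) = ks t"
      unfolding ks'_def using kt assms(1) by (simp add: bij_betw_inv_into_right)
    ultimately show ?thesis using assms(2) by metis
  qed
  ultimately show ?thesis
    unfolding has_complete_chain_def
  proof (intro exI[of _ ks'] conjI allI impI ballI)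
    fix t assume t: "1 \<le> t \<and> t \<le> n - 1"
    then have "t \<in> {1..n}" "t + 1 \<in> {1..n}" by auto
    then show "A (ks' t) \<inter> A (ks' (t + 1)) \<noteq> {}"
      using inter t by (simp add: agree)
  next
    fix t x assume t: "1 \<le> t \<and> t \<le> n - 1" and x: "x \<in> A (ks' t)"
    then have t_in: "t \<in> {1..n}" "t + 1 \<in> {1..n}" "2 \<le> t \<Longrightarrow> t - 1 \<in> {1..n}" by auto
    have "(2 \<le> t \<and> x \<in> B (ks (t - 1)) \<inter> B (ks t)) \<or> x \<in> B (ks t) \<inter> B (ks (t + 1))"
      using cover t x agree[OF t_in(1)] by blast
    then show "(2 \<le> t \<and> x \<in> A (ks' (t - 1)) \<inter> A (ks' t)) \<or> x \<in> A (ks' t) \<inter> A (ks' (t + 1))"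
      using agree t_in by auto
  qed
qed

lemma has_complete_chain_identity_order:
  assumes "\<And>t. 1 \<le> t \<Longrightarrow> t \<le> n - 1 \<Longrightarrow> B t \<inter> B (t + 1) \<noteq> {}"
    and "\<And>t x. 1 \<le> t \<Longrightarrow> t \<le> n - 1 \<Longrightarrow> x \<in> B t \<Longrightarrow>
           (2 \<le> t \<and> x \<in> B (t - 1)) \<or> x \<in> B (t + 1)"
  shows "has_complete_chain B n"
  unfolding has_complete_chain_def
  using assms by (intro exI[of _ id]) auto

lemma assoc_set_id_inter_Suc:
  assumes "1 \<le> p" and "1 \<le> s1 p" and "0 < m1"
  shows "s2 (s1 p) \<in> assoc_set id s1 s2 m1 m2 p \<inter> assoc_set id s1 s2 m1 m2 (p + 1)"
proof -
  have "s2 (s1 p) \<in> assoc_set id s1 s2 m1 m2 p"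
    unfolding mem_assoc_set using assms by (intro exI[of _ 0] exI[of _ 0]) auto
  moreover have "s2 (s1 p) \<in> assoc_set id s1 s2 m1 m2 (p + 1)"
    unfolding mem_assoc_set using assms by (intro exI[of _ 1] exI[of _ 0]) auto
  ultimately show ?thesis by blast
qed

lemma assoc_set_id_covered_by_neighbours:
  assumes x: "x \<in> assoc_set id s1 s2 m1 m2 p" and "0 < m1"
  shows "(2 \<le> p \<and> x \<in> assoc_set id s1 s2 m1 m2 (p - 1)) \<or> x \<in> assoc_set id s1 s2 m1 m2 (p + 1)"
proof -
  obtain i j where x_eq: "x = s2 (s1 (p - i) - j)" and ij: "i \<le> m1" "j \<le> m2"
    and pos: "1 \<le> p - i" "1 \<le> s1 (p - i) - j"
    using x unfolding mem_assoc_set by auto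
  show ?thesis
  proof (cases "i < m1")
    case True
    have "p + 1 - (i + 1) = p - i" by simp
    then have "x \<in> assoc_set id s1 s2 m1 m2 (p + 1)"
      unfolding mem_assoc_set id_def using x_eq ij pos True
      by (intro exI[of _ "i + 1"] exI[of _ j]) simp
    then show ?thesis ..
  next
    case False
    with ij \<open>0 < m1\<close> pos have "2 \<le> p" "p - 1 - (i - 1) = p - i" "i - 1 \<le> m1" by auto
    then have "x \<in> assoc_set id s1 s2 m1 m2 (p - 1)"
      unfolding mem_assoc_set id_def using x_eq ij pos
      by (intro exI[of _ "i - 1"] exI[of _ j]) simp
    with \<open>2 \<le> p\<close> show ?thesis by blast
  qed
qed

theorem theorem1:
  fixes M N n m1 m2 :: nat and s0 s1 s2 :: "nat \<Rightarrow> nat"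
  assumes "n = M * N" and "n \<ge> 2"
    and "m1 > 0" and "m2 > 0"
    and "bij_betw s0 {1..n} {1..n}"
    and "bij_betw s1 {1..n} {1..n}"
    and "bij_betw s2 {1..n} {1..n}"
  shows "has_complete_chain (assoc_set s0 s1 s2 m1 m2) n"
proof (rule has_complete_chain_reindex[OF assms(5) assoc_set_eq_assoc_set_id])
  have "1 \<le> s1 t" if "1 \<le> t" "t \<le> n - 1" for t
    using bij_betw_apply[OF assms(6), of t] that by auto
  then show "has_complete_chain (assoc_set id s1 s2 m1 m2) n"
    using assoc_set_id_inter_Suc assoc_set_id_covered_by_neighbours \<open>m1 > 0\<close>
    by (intro has_complete_chain_identity_order) blast+
qed

end
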